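(* Let $G$ be a finite group and $X$ a path-connected CW complex with a free cellular $G$-action such that $\mathrm{cat}(X)=\mathrm{TC}(X)$. Then $\mathrm{TC}^{G,\infty}(X)=\mathrm{cat}(X)$.
   Context: $\mathrm{cat}$, $\mathrm{TC}$ are reduced LS category and topological complexity. $PX$ is the path space; $\mathcal{P}_k(X)=\{(\gamma_1,\dots,\gamma_k)\in(PX)^k\mid G\gamma_i(1)=G\gamma_{i+1}(0),\ 1\le i\le k-1\}$, $\pi_k(\gamma_1,\dots,\gamma_k)=(\gamma_1(0),\gamma_k(1))\in X\times X$; $\mathrm{secat}$ is reduced sectional category (least $n$ such that the base is covered by $n+1$ open sets each admitting a homotopy section); $\mathrm{TC}^{G,k}(X)=\mathrm{secat}(\pi_k)$, $\mathrm{TC}^{G,\infty}(X)=\min_k\mathrm{TC}^{G,k}(X)$. *)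

theory Defs
  imports "HOL-Analysis.Analysis" "HOL-Algebra.Group_Action"
begin

definition disc_set :: "nat \<Rightarrow> (nat \<Rightarrow> real) set" where
  "disc_set n = {x. (\<forall>i\<ge>n. x i = 0) \<and> (\<Sum>i<n. (x i)^2) \<le> 1}"

definition open_disc_set :: "nat \<Rightarrow> (nat \<Rightarrow> real) set" where
  "open_disc_set n = {x. (\<forall>i\<ge>n. x i = 0) \<and> (\<Sum>i<n. (x i)^2) < 1}"

definition sphere_set :: "nat \<Rightarrow> (nat \<Rightarrow> real) set" where
  "sphere_set n = {x. (\<forall>i\<ge>n. x i = 0) \<and> (\<Sum>i<n. (x i)^2) = 1}"

definition disc_top :: "nat \<Rightarrow> (nat \<Rightarrow> real) topology" where
  "disc_top n = subtopology (powertop_real UNIV) (disc_set n)"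

definition cw_structure ::
  "'a topology \<Rightarrow> 'a set set \<Rightarrow> ('a set \<Rightarrow> nat) \<Rightarrow> ('a set \<Rightarrow> (nat \<Rightarrow> real) \<Rightarrow> 'a) \<Rightarrow> bool" where
  "cw_structure X E cdim chi \<longleftrightarrow>
     Hausdorff_space X \<and>
     pairwise disjnt E \<and> \<Union>E = topspace X \<and>
     (\<forall>e\<in>E. continuous_map (disc_top (cdim e)) X (chi e)) \<and>
     (\<forall>e\<in>E. chi e ` open_disc_set (cdim e) = e) \<and>
     (\<forall>e\<in>E. homeomorphic_map (subtopology (disc_top (cdim e)) (open_disc_set (cdim e)))
                               (subtopology X e) (chi e)) \<and>
     (\<forall>e\<in>E. \<exists>F. finite F \<and> F \<subseteq> E \<and> (\<forall>e'\<in>F. cdim e' < cdim e) \<and>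
                   chi e ` sphere_set (cdim e) \<subseteq> \<Union>F) \<and>
     (\<forall>A. A \<subseteq> topspace X \<longrightarrow>
        (closedin X A \<longleftrightarrow>
          (\<forall>e\<in>E. closedin (disc_top (cdim e)) {x \<in> disc_set (cdim e). chi e x \<in> A})))"

abbreviation unit_I :: "real topology" where
  "unit_I \<equiv> top_of_set {0..1}"

text \<open>Least n such that the space B is covered by n+1 open sets each satisfying P
  (infinity if there is no such n).\<close>
definition cover_number :: "'b topology \<Rightarrow> ('b set \<Rightarrow> bool) \<Rightarrow> enat" where
  "cover_number B P = Inf {enat n | n. \<exists>U :: nat \<Rightarrow> 'b set.
      (\<forall>i\<le>n. openin B (U i) \<and> P (U i)) \<and> (\<Union>i\<le>n. U i) = topspace B}"

definition LS_cat :: "'a topology \<Rightarrow> enat" where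
  "LS_cat X = cover_number X
     (\<lambda>U. \<exists>a\<in>topspace X. homotopic_with (\<lambda>_. True) (subtopology X U) X id (\<lambda>_. a))"

text \<open>A continuous map U \<rightarrow> PX is encoded by its continuous adjoint U \<times> [0,1] \<rightarrow> X
  (exponential law; [0,1] is locally compact Hausdorff).
  Reduced TC(X) = secat of the path fibration PX \<rightarrow> X \<times> X, with homotopy sections.\<close>
definition TC :: "'a topology \<Rightarrow> enat" where
  "TC X = cover_number (prod_topology X X)
     (\<lambda>U. \<exists>h :: ('a \<times> 'a) \<times> real \<Rightarrow> 'a.
        continuous_map (prod_topology (subtopology (prod_topology X X) U) unit_I) X h \<and>
        homotopic_with (\<lambda>_. True) (subtopology (prod_topology X X) U) (prod_topology X X)
           (\<lambda>u. (h (u, 0), h (u, 1))) id)"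

text \<open>TC^{G,k}(X) = secat(\<pi>_k : P_k(X) \<rightarrow> X \<times> X). A continuous map U \<rightarrow> P_k(X) is
  a k-tuple of adjoints h 1, ..., h k with G h_i(u,1) = G h_{i+1}(u,0).\<close>
definition TC_G_k :: "'a topology \<Rightarrow> ('g, 'm) monoid_scheme \<Rightarrow> ('g \<Rightarrow> 'a \<Rightarrow> 'a) \<Rightarrow> nat \<Rightarrow> enat" where
  "TC_G_k X G \<phi> k = cover_number (prod_topology X X)
     (\<lambda>U. \<exists>h :: nat \<Rightarrow> ('a \<times> 'a) \<times> real \<Rightarrow> 'a.
        (\<forall>i\<in>{1..k}. continuous_map (prod_topology (subtopology (prod_topology X X) U) unit_I) X (h i)) \<and>
        (\<forall>u\<in>U. \<forall>i\<in>{1..<k}. orbit G \<phi> (h i (u, 1)) = orbit G \<phi> (h (Suc i) (u, 0))) \<and>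
        homotopic_with (\<lambda>_. True) (subtopology (prod_topology X X) U) (prod_topology X X)
           (\<lambda>u. (h 1 (u, 0), h k (u, 1))) id)"

definition TC_G_inf :: "'a topology \<Rightarrow> ('g, 'm) monoid_scheme \<Rightarrow> ('g \<Rightarrow> 'a \<Rightarrow> 'a) \<Rightarrow> enat" where
  "TC_G_inf X G \<phi> = (INF k\<in>{1..}. TC_G_k X G \<phi> k)"

end

theory Submission
  imports Defs
begin

(* Taking k = 1 gives TC^{G,\<infinity>}(X) \<le> TC(X) = cat(X). Conversely, fix x0 \<in> X and a section
   of \<pi>_k over an open U \<subseteq> X \<times> X: paths h_1(u), ..., h_k(u) with h_{i+1}(u)(0) = g_i h_i(u)(1)
   for some g_i \<in> G, and (h_1(u)(0), h_k(u)(1)) homotopic to u. On the slice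
   V = {x. (x, x0) \<in> U} the inclusion is then homotopic to x \<mapsto> h_1(x, x0)(0), and
   x \<mapsto> h_k(x, x0)(1) to the constant x0. As G is finite and acts freely on the Hausdorff space X,
   the g_i are locally constant on V, so V is a disjoint union of open pieces on which all g_i are
   fixed. On such a piece, descending from i = k, each x \<mapsto> h_i(x, x0)(0) is homotopic to a
   constant, which path connectedness moves to x0; the homotopies glue across the pieces. So the
   slices of a sectional cover of \<pi>_k form a categorical cover and cat(X) \<le> TC^{G,k}(X). *)

lemma cover_number_le_pullback:
  assumes j: "continuous_map A B j"
    and PQ: "\<And>U. openin B U \<Longrightarrow> P U \<Longrightarrow> Q {x \<in> topspace A. j x \<in> U}"
  shows "cover_number A Q \<le> cover_number B P"
  unfolding cover_number_def
proof (rule Inf_superset_mono, clarify)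
  fix n :: nat and U assume U: "\<forall>i\<le>n. openin B (U i) \<and> P (U i)" "(\<Union>i\<le>n. U i) = topspace B"
  let ?V = "\<lambda>i. {x \<in> topspace A. j x \<in> U i}"
  show "\<exists>m. enat n = enat m \<and>
      (\<exists>V. (\<forall>i\<le>m. openin A (V i) \<and> Q (V i)) \<and> (\<Union>i\<le>m. V i) = topspace A)"
  proof (intro exI[of _ n] exI[of _ ?V] conjI refl)
    show "\<forall>i\<le>n. openin A (?V i) \<and> Q (?V i)"
      using U(1) PQ openin_continuous_map_preimage[OF j] by blast
    show "(\<Union>i\<le>n. ?V i) = topspace A"
      using U(2)[symmetric] continuous_map_image_subset_topspace[OF j] by (auto simp: image_subset_iff)
  qed
qed

lemma LS_cat_trivial_topology: "LS_cat trivial_topology = \<infinity>"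
  by (auto simp: LS_cat_def cover_number_def Inf_enat_def)

lemma TC_trivial_topology: "TC trivial_topology = 0"
proof -
  have "TC trivial_topology \<le> enat 0"
    unfolding TC_def cover_number_def
    by (rule Inf_lower) (auto intro!: exI[of _ "\<lambda>_. {}"] simp: homotopic_on_emptyI)
  then show ?thesis
    by (simp add: zero_enat_def[symmetric])
qed

lemma TC_G_k_1: "TC_G_k X G \<phi> 1 = TC X"
  unfolding TC_G_k_def TC_def
  by (intro arg_cong[where f = "cover_number _"] ext iffI; elim exE conjE)
    (force, rule exI[where x = "\<lambda>_. _"], simp)

lemma TC_G_inf_le_TC: "TC_G_inf X G \<phi> \<le> TC X"
  unfolding TC_G_inf_def by (metis INF_lower TC_G_k_1 atLeast_iff order_refl)

lemma homotopic_with_disjoint_open_cover: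
  assumes open_W: "\<And>i. i \<in> I \<Longrightarrow> openin X (W i)"
    and disjoint_W: "\<And>i j x. i \<in> I \<Longrightarrow> j \<in> I \<Longrightarrow> x \<in> W i \<Longrightarrow> x \<in> W j \<Longrightarrow> i = j"
    and cover_W: "topspace X \<subseteq> (\<Union>i\<in>I. W i)"
    and hom: "\<And>i. i \<in> I \<Longrightarrow> homotopic_with (\<lambda>_. True) (subtopology X (W i)) Y f g"
  shows "homotopic_with (\<lambda>_. True) X Y f g"
proof -
  obtain H where H: "\<And>i. i \<in> I \<Longrightarrow>
      continuous_map (prod_topology unit_I (subtopology X (W i))) Y (H i) \<and>
      (\<forall>x \<in> topspace X \<inter> W i. H i (0, x) = f x \<and> H i (1, x) = g x)"
    using hom by (simp add: homotopic_with) metis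
  define index where "index x = (SOME i. i \<in> I \<and> x \<in> W i)" for x
  have index: "index x \<in> I" "x \<in> W (index x)" if "x \<in> topspace X" for x
    using someI_ex[of "\<lambda>i. i \<in> I \<and> x \<in> W i"] cover_W that unfolding index_def by blast+
  define K where "K = (\<lambda>(t, x). H (index x) (t, x))"
  have "continuous_map (prod_topology unit_I X) Y K"
  proof (rule pasting_lemma[where I = I and T = "\<lambda>i. {0..1} \<times> W i" and f = H])
    fix i assume "i \<in> I"
    then show "openin (prod_topology unit_I X) ({0..1} \<times> W i)"
      using open_W by (simp add: openin_prod_Times_iff)
    show "continuous_map (subtopology (prod_topology unit_I X) ({0..1} \<times> W i)) Y (H i)"
      using H[OF \<open>i \<in> I\<close>] by (simp add: subtopology_Times subtopology_subtopology)
  next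
    fix i j p
    assume "i \<in> I" "j \<in> I"
      and "p \<in> topspace (prod_topology unit_I X) \<inter> {0..1} \<times> W i \<inter> {0..1} \<times> W j"
    then show "H i p = H j p"
      using disjoint_W by auto
  next
    fix p assume "p \<in> topspace (prod_topology unit_I X)"
    then show "\<exists>j. j \<in> I \<and> p \<in> {0..1} \<times> W j \<and> K p = H j p"
      using index[of "snd p"] by (auto simp: K_def split: prod.split)
  qed
  moreover have "K (0, x) = f x" "K (1, x) = g x" if "x \<in> topspace X" for x
    using H[OF index(1)[OF that]] index[OF that] that by (auto simp: K_def)
  ultimately show ?thesis
    by (auto simp: homotopic_with)
qed

lemma (in group_action) free_action_eq_imp_eq:
  assumes free: "\<forall>g\<in>carrier G. \<forall>x\<in>E. \<phi> g x = x \<longrightarrow> g = \<one>"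
    and g: "g \<in> carrier G" and h: "h \<in> carrier G" and x: "x \<in> E" and eq: "\<phi> g x = \<phi> h x"
  shows "g = h"
proof -
  interpret group G
    using group_hom group_hom.axioms(1) by blast
  have "\<phi> (inv h \<otimes> g) x = \<phi> (inv h) (\<phi> h x)"
    using composition_rule[OF x _ g] h eq by simp
  also have "\<dots> = x"
    using orbit_sym_aux[OF h x refl] .
  finally have "inv h \<otimes> g = \<one>"
    using free g h x by blast
  then show ?thesis
    using g h by (metis inv_equality inv_inv inv_closed)
qed

lemma openin_free_translate_eq:
  fixes G :: "('g, 'm) monoid_scheme"
  assumes act: "group_action G (topspace X) \<phi>" and fin: "finite (carrier G)"
    and free: "\<forall>g\<in>carrier G. \<forall>x\<in>topspace X. \<phi> g x = x \<longrightarrow> g = \<one>\<^bsub>G\<^esub>"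
    and cont_act: "\<forall>g\<in>carrier G. continuous_map X X (\<phi> g)"
    and haus: "Hausdorff_space X"
    and f: "continuous_map T X f" and f': "continuous_map T X f'"
    and orb: "\<And>x. x \<in> topspace T \<Longrightarrow> f' x \<in> orbit G \<phi> (f x)"
    and g: "g \<in> carrier G"
  shows "openin T {x \<in> topspace T. f' x = \<phi> g (f x)}"
proof -
  interpret group_action G "topspace X" \<phi>
    by (rule act)
  define C where "C h = {x \<in> topspace T. f' x = (\<phi> h \<circ> f) x}" for h
  have closed_C: "closedin T (C h)" if "h \<in> carrier G" for h
  proof -
    have "continuous_map T X (\<phi> h \<circ> f)"
      using continuous_map_compose[OF f] cont_act that by blast
    then show ?thesis
      unfolding C_def by (rule closedin_continuous_maps_eq[OF haus f'])
  qed
  have "{x \<in> topspace T. f' x = \<phi> g (f x)} = topspace T - \<Union>(C ` (carrier G - {g}))"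
  proof (rule equalityI; rule subsetI)
    fix x assume x: "x \<in> {x \<in> topspace T. f' x = \<phi> g (f x)}"
    have "f x \<in> topspace X"
      using x f continuous_map_image_subset_topspace by blast
    then have "h = g" if "h \<in> carrier G" "x \<in> C h" for h
      using free_action_eq_imp_eq[OF free that(1) g] x that by (auto simp: C_def)
    then show "x \<in> topspace T - \<Union>(C ` (carrier G - {g}))"
      using x by blast
  next
    fix x assume x: "x \<in> topspace T - \<Union>(C ` (carrier G - {g}))"
    then obtain h where "h \<in> carrier G" "f' x = \<phi> h (f x)"
      using orb by (auto simp: orbit_def)
    then show "x \<in> {x \<in> topspace T. f' x = \<phi> g (f x)}"
      using x by (auto simp: C_def)
  qed
  moreover have "closedin T (\<Union>(C ` (carrier G - {g})))"
    using fin closed_C by (intro closedin_Union) auto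
  ultimately show ?thesis
    by (simp add: openin_diff)
qed

lemma homotopic_const_along_translates:
  fixes G :: "('g, 'm) monoid_scheme" (structure)
  assumes act: "group_action G (topspace X) \<phi>"
    and cont_act: "\<forall>g\<in>carrier G. continuous_map X X (\<phi> g)"
    and pc: "path_connected_space X" and x0: "x0 \<in> topspace X"
    and hom: "\<And>i. i \<in> {1..k} \<Longrightarrow> homotopic_with (\<lambda>_. True) T X (A i) (B i)"
    and translate: "\<And>i x. i \<in> {1..<k} \<Longrightarrow> x \<in> topspace T \<Longrightarrow> A (Suc i) x = \<phi> (\<gamma> i) (B i x)"
    and \<gamma>: "\<And>i. i \<in> {1..<k} \<Longrightarrow> \<gamma> i \<in> carrier G"
    and last: "homotopic_with (\<lambda>_. True) T X (B k) (\<lambda>_. x0)"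
    and k: "1 \<le> k"
  shows "homotopic_with (\<lambda>_. True) T X (A 1) (\<lambda>_. x0)"
proof -
  interpret group_action G "topspace X" \<phi>
    by (rule act)
  interpret group G
    using group_hom group_hom.axioms(1) by blast
  have translate_null: "homotopic_with (\<lambda>_. True) T X (\<phi> g \<circ> f) (\<lambda>_. x0)"
    if f: "homotopic_with (\<lambda>_. True) T X f (\<lambda>_. x0)" and g: "g \<in> carrier G" for f g
  proof -
    have "homotopic_with (\<lambda>_. True) T X (\<phi> g \<circ> f) (\<phi> g \<circ> (\<lambda>_. x0))"
      using f cont_act g by (intro homotopic_with_compose_continuous_map_left) auto
    then have "homotopic_with (\<lambda>_. True) T X (\<phi> g \<circ> f) (\<lambda>_. \<phi> g x0)"
      by (simp add: o_def)
    moreover have "homotopic_with (\<lambda>_. True) T X (\<lambda>_. \<phi> g x0) (\<lambda>_. x0)"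
      using pc x0 element_image[OF g x0 refl]
      by (simp add: homotopic_constant_maps path_connected_space_iff_path_component)
    ultimately show ?thesis
      by (rule homotopic_with_trans)
  qed
  have "homotopic_with (\<lambda>_. True) T X (A i) (\<lambda>_. x0)" if "1 \<le> i" "i \<le> k" for i
    using that(2)
  proof (induction rule: inc_induct)
    case base
    show ?case
      using hom[of k] last k homotopic_with_trans by auto
  next
    case (step n)
    then have n: "n \<in> {1..<k}"
      using that(1) by simp
    have B_eq: "B n x = (\<phi> (inv (\<gamma> n)) \<circ> A (Suc n)) x" if "x \<in> topspace T" for x
    proof -
      have "B n x \<in> topspace X"
        using hom[of n] n that continuous_map_image_subset_topspace
        by (fastforce dest: homotopic_with_imp_continuous_maps)
      then show ?thesis
        using orbit_sym_aux[OF \<gamma>[OF n] _ translate[OF n that, symmetric]] by simp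
    qed
    have "homotopic_with (\<lambda>_. True) T X (\<phi> (inv (\<gamma> n)) \<circ> A (Suc n)) (\<lambda>_. x0)"
      using translate_null step.IH \<gamma>[OF n] by blast
    then have "homotopic_with (\<lambda>_. True) T X (B n) (\<lambda>_. x0)"
      by (rule homotopic_with_eq) (simp_all add: B_eq)
    then show ?case
      using hom[of n] n homotopic_with_trans by auto
  qed
  then show ?thesis
    using k by simp
qed

lemma homotopic_const_along_orbits:
  fixes G :: "('g, 'm) monoid_scheme"
  assumes act: "group_action G (topspace X) \<phi>" and fin: "finite (carrier G)"
    and free: "\<forall>g\<in>carrier G. \<forall>x\<in>topspace X. \<phi> g x = x \<longrightarrow> g = \<one>\<^bsub>G\<^esub>"
    and cont_act: "\<forall>g\<in>carrier G. continuous_map X X (\<phi> g)"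
    and haus: "Hausdorff_space X" and pc: "path_connected_space X" and x0: "x0 \<in> topspace X"
    and hom: "\<And>i. i \<in> {1..k} \<Longrightarrow> homotopic_with (\<lambda>_. True) T X (A i) (B i)"
    and orb: "\<And>i x. i \<in> {1..<k} \<Longrightarrow> x \<in> topspace T \<Longrightarrow> A (Suc i) x \<in> orbit G \<phi> (B i x)"
    and last: "homotopic_with (\<lambda>_. True) T X (B k) (\<lambda>_. x0)"
    and k: "1 \<le> k"
  shows "homotopic_with (\<lambda>_. True) T X (A 1) (\<lambda>_. x0)"
proof -
  interpret group_action G "topspace X" \<phi>
    by (rule act)
  define W where "W \<gamma> = {x \<in> topspace T. \<forall>i\<in>{1..<k}. A (Suc i) x = \<phi> (\<gamma> i) (B i x)}" for \<gamma>
  have cont: "continuous_map T X (A i)" "continuous_map T X (B i)" if "i \<in> {1..k}" for i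
    using homotopic_with_imp_continuous_maps[OF hom[OF that]] by auto
  show ?thesis
  proof (rule homotopic_with_disjoint_open_cover[where I = "{1..<k} \<rightarrow>\<^sub>E carrier G" and W = W])
    fix \<gamma> assume \<gamma>: "\<gamma> \<in> {1..<k} \<rightarrow>\<^sub>E carrier G"
    have "openin T ((\<Inter>i\<in>{1..<k}. {x \<in> topspace T. A (Suc i) x = \<phi> (\<gamma> i) (B i x)}) \<inter> topspace T)"
      using \<gamma> cont
      by (intro openin_INT openin_free_translate_eq[OF act fin free cont_act haus]) (auto intro: orb)
    moreover have "W \<gamma> = (\<Inter>i\<in>{1..<k}. {x \<in> topspace T. A (Suc i) x = \<phi> (\<gamma> i) (B i x)}) \<inter> topspace T"
      by (auto simp: W_def)
    ultimately show "openin T (W \<gamma>)"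
      by simp
    show "homotopic_with (\<lambda>_. True) (subtopology T (W \<gamma>)) X (A 1) (\<lambda>_. x0)"
    proof (rule homotopic_const_along_translates[OF act cont_act pc x0,
          where A = A and B = B and \<gamma> = \<gamma> and k = k])
      show "homotopic_with (\<lambda>_. True) (subtopology T (W \<gamma>)) X (A i) (B i)" if "i \<in> {1..k}" for i
        using hom[OF that] by (rule homotopic_from_subtopology)
      show "A (Suc i) x = \<phi> (\<gamma> i) (B i x)" if "i \<in> {1..<k}" "x \<in> topspace (subtopology T (W \<gamma>))" for i x
        using that by (auto simp: W_def)
      show "\<gamma> i \<in> carrier G" if "i \<in> {1..<k}" for i
        using \<gamma> that by auto
      show "homotopic_with (\<lambda>_. True) (subtopology T (W \<gamma>)) X (B k) (\<lambda>_. x0)"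
        using last by (rule homotopic_from_subtopology)
    qed (rule k)
  next
    fix \<gamma> \<delta> x
    assume \<gamma>: "\<gamma> \<in> {1..<k} \<rightarrow>\<^sub>E carrier G" and \<delta>: "\<delta> \<in> {1..<k} \<rightarrow>\<^sub>E carrier G"
      and x: "x \<in> W \<gamma>" "x \<in> W \<delta>"
    have "\<gamma> i = \<delta> i" if i: "i \<in> {1..<k}" for i
    proof (rule free_action_eq_imp_eq[OF free])
      show "\<gamma> i \<in> carrier G" "\<delta> i \<in> carrier G"
        using \<gamma> \<delta> i by auto
      show "B i x \<in> topspace X"
        using cont(2)[of i] i x continuous_map_image_subset_topspace by (fastforce simp: W_def)
      show "\<phi> (\<gamma> i) (B i x) = \<phi> (\<delta> i) (B i x)"
        using x i by (auto simp: W_def)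
    qed
    then show "\<gamma> = \<delta>"
      using \<gamma> \<delta> by (intro PiE_ext) auto
  next
    show "topspace T \<subseteq> (\<Union>\<gamma>\<in>{1..<k} \<rightarrow>\<^sub>E carrier G. W \<gamma>)"
    proof
      fix x assume x: "x \<in> topspace T"
      define \<gamma> where "\<gamma> = restrict (\<lambda>i. SOME g. g \<in> carrier G \<and> A (Suc i) x = \<phi> g (B i x)) {1..<k}"
      have "\<gamma> i \<in> carrier G \<and> A (Suc i) x = \<phi> (\<gamma> i) (B i x)" if "i \<in> {1..<k}" for i
        using someI_ex[of "\<lambda>g. g \<in> carrier G \<and> A (Suc i) x = \<phi> g (B i x)"] orb[OF that x] that
        by (auto simp: \<gamma>_def orbit_def)
      then show "x \<in> (\<Union>\<gamma>\<in>{1..<k} \<rightarrow>\<^sub>E carrier G. W \<gamma>)"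
        using x by (auto simp: W_def \<gamma>_def intro!: bexI[of _ \<gamma>])
    qed
  qed
qed

lemma homotopic_id_const_on_slice:
  fixes G :: "('g, 'm) monoid_scheme" and h :: "nat \<Rightarrow> ('a \<times> 'a) \<times> real \<Rightarrow> 'a"
  assumes act: "group_action G (topspace X) \<phi>" and fin: "finite (carrier G)"
    and free: "\<forall>g\<in>carrier G. \<forall>x\<in>topspace X. \<phi> g x = x \<longrightarrow> g = \<one>\<^bsub>G\<^esub>"
    and cont_act: "\<forall>g\<in>carrier G. continuous_map X X (\<phi> g)"
    and haus: "Hausdorff_space X" and pc: "path_connected_space X" and x0: "x0 \<in> topspace X"
    and k: "1 \<le> k"
    and h_cont: "\<forall>i\<in>{1..k}. continuous_map (prod_topology (subtopology (prod_topology X X) U) unit_I) X (h i)"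
    and h_orbit: "\<forall>u\<in>U. \<forall>i\<in>{1..<k}. orbit G \<phi> (h i (u, 1)) = orbit G \<phi> (h (Suc i) (u, 0))"
    and h_ends: "homotopic_with (\<lambda>_. True) (subtopology (prod_topology X X) U) (prod_topology X X)
           (\<lambda>u. (h 1 (u, 0), h k (u, 1))) id"
  shows "homotopic_with (\<lambda>_. True) (subtopology X {x \<in> topspace X. (x, x0) \<in> U}) X id (\<lambda>_. x0)"
proof -
  interpret group_action G "topspace X" \<phi>
    by (rule act)
  let ?T = "subtopology X {x \<in> topspace X. (x, x0) \<in> U}"
  define A where "A i x = h i ((x, x0), 0)" for i x
  define B where "B i x = h i ((x, x0), 1)" for i x
  have slice: "continuous_map ?T (subtopology (prod_topology X X) U) (\<lambda>x. (x, x0))"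
    using x0 by (auto simp: continuous_map_in_subtopology continuous_map_from_subtopology
        intro!: continuous_map_pairedI)
  have hom: "homotopic_with (\<lambda>_. True) ?T X (A i) (B i)" if i: "i \<in> {1..k}" for i
  proof -
    have "continuous_map (prod_topology unit_I ?T) (prod_topology (subtopology (prod_topology X X) U) unit_I)
        (\<lambda>(t, x). ((x, x0), t))"
      using continuous_map_compose[OF continuous_map_snd slice]
      by (auto simp: case_prod_unfold o_def intro!: continuous_map_pairedI continuous_map_fst)
    then have "continuous_map (prod_topology unit_I ?T) X (h i \<circ> (\<lambda>(t, x). ((x, x0), t)))"
      using h_cont i by (intro continuous_map_compose) auto
    then show ?thesis
      unfolding homotopic_with_def by (intro exI) (auto simp: A_def B_def)
  qed
  have ends: "homotopic_with (\<lambda>_. True) ?T (prod_topology X X) (\<lambda>x. (A 1 x, B k x)) (\<lambda>x. (x, x0))"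
    using homotopic_with_compose_continuous_map_right[OF h_ends slice]
    by (simp add: o_def A_def B_def)
  have "homotopic_with (\<lambda>_. True) ?T X id (A 1)"
    using homotopic_with_compose_continuous_map_left[OF ends continuous_map_fst]
    by (simp add: o_def id_def homotopic_with_sym)
  moreover have "homotopic_with (\<lambda>_. True) ?T X (A 1) (\<lambda>_. x0)"
  proof (rule homotopic_const_along_orbits[OF act fin free cont_act haus pc x0 hom _ _ k])
    show "homotopic_with (\<lambda>_. True) ?T X (B k) (\<lambda>_. x0)"
      using homotopic_with_compose_continuous_map_left[OF ends continuous_map_snd] by (simp add: o_def)
    fix i x assume i: "i \<in> {1..<k}" and x: "x \<in> topspace ?T"
    have "A (Suc i) x \<in> topspace X"
      using hom[of "Suc i"] i x continuous_map_image_subset_topspace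
      by (fastforce dest: homotopic_with_imp_continuous_maps)
    then have "A (Suc i) x \<in> orbit G \<phi> (A (Suc i) x)"
      by (rule orbit_refl)
    then show "A (Suc i) x \<in> orbit G \<phi> (B i x)"
      using h_orbit i x by (simp add: A_def B_def)
  qed
  ultimately show ?thesis
    by (rule homotopic_with_trans)
qed

lemma LS_cat_le_TC_G_k:
  fixes G :: "('g, 'm) monoid_scheme"
  assumes act: "group_action G (topspace X) \<phi>" and fin: "finite (carrier G)"
    and free: "\<forall>g\<in>carrier G. \<forall>x\<in>topspace X. \<phi> g x = x \<longrightarrow> g = \<one>\<^bsub>G\<^esub>"
    and cont_act: "\<forall>g\<in>carrier G. continuous_map X X (\<phi> g)"
    and haus: "Hausdorff_space X" and pc: "path_connected_space X"
    and x0: "x0 \<in> topspace X" and k: "1 \<le> k"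
  shows "LS_cat X \<le> TC_G_k X G \<phi> k"
proof -
  have "continuous_map X (prod_topology X X) (\<lambda>x. (x, x0))"
    using x0 by (auto intro: continuous_map_pairedI)
  then show ?thesis
    unfolding LS_cat_def TC_G_k_def
  proof (rule cover_number_le_pullback)
    fix U
    assume "\<exists>h :: nat \<Rightarrow> ('a \<times> 'a) \<times> real \<Rightarrow> 'a.
        (\<forall>i\<in>{1..k}. continuous_map (prod_topology (subtopology (prod_topology X X) U) unit_I) X (h i)) \<and>
        (\<forall>u\<in>U. \<forall>i\<in>{1..<k}. orbit G \<phi> (h i (u, 1)) = orbit G \<phi> (h (Suc i) (u, 0))) \<and>
        homotopic_with (\<lambda>_. True) (subtopology (prod_topology X X) U) (prod_topology X X)
           (\<lambda>u. (h 1 (u, 0), h k (u, 1))) id"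
    then show "\<exists>a\<in>topspace X.
        homotopic_with (\<lambda>_. True) (subtopology X {x \<in> topspace X. (x, x0) \<in> U}) X id (\<lambda>_. a)"
      using homotopic_id_const_on_slice[OF act fin free cont_act haus pc x0 k] x0 by blast
  qed
qed

theorem mainTheorem15:
  fixes X :: "'a topology" and G :: "('g, 'm) monoid_scheme" and \<phi> :: "'g \<Rightarrow> 'a \<Rightarrow> 'a"
  assumes "group G" and "finite (carrier G)"
    and "path_connected_space X"
    and "group_action G (topspace X) \<phi>"
    and "\<forall>g\<in>carrier G. continuous_map X X (\<phi> g)"
    and "\<forall>g\<in>carrier G. \<forall>x\<in>topspace X. \<phi> g x = x \<longrightarrow> g = \<one>\<^bsub>G\<^esub>"
    and "\<exists>E cdim chi. cw_structure X E cdim chi \<and> (\<forall>g\<in>carrier G. \<forall>e\<in>E. \<phi> g ` e \<in> E)"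
    and "LS_cat X = TC X"
  shows "TC_G_inf X G \<phi> = LS_cat X"
proof (rule antisym)
  show "TC_G_inf X G \<phi> \<le> LS_cat X"
    using TC_G_inf_le_TC assms(8) by simp
  have "X \<noteq> trivial_topology"
    using assms(8) by (auto simp: LS_cat_trivial_topology TC_trivial_topology)
  then obtain x0 where x0: "x0 \<in> topspace X"
    by fastforce
  have haus: "Hausdorff_space X"
    using assms(7) by (auto simp: cw_structure_def)
  show "LS_cat X \<le> TC_G_inf X G \<phi>"
    unfolding TC_G_inf_def
    using LS_cat_le_TC_G_k[OF assms(4,2,6,5) haus assms(3) x0] by (auto intro: INF_greatest)
qed

end
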